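(* In any packing produced by the algorithm OnlinePacker (described in the context), there are at most two near-empty boxes of each box type.
   Context: Setting: online translational strip packing. The strip is a horizontal strip of height 1, bounded on the left by a vertical segment and unbounded to the right. Pieces arrive one at a time, each must be placed by a translation only, interior-disjoint from previously placed pieces, before the next piece is revealed. Here all pieces are horizontal parallelograms (parallelograms with a pair of horizontal edges, the base edges) of height 1 and width at most 1. Box types: these form an infinite ternary tree. The root, the basic box type, is a 2 x 1 rectangle. A d-dimensional box type is a vector [x_1,...,x_d] in {-1,0,+1}^d and is a horizontal parallelogram of height 1. Given type T = [x_1,...,x_d] with bottom edge b and top edge t, split b into three equal consecutive segments b_{-1}, b_0, b_{+1} (left to right) and t likewise into t_{-1}, t_0, t_{+1}; the child type T ⊕ [x_{d+1}] = [x_1,...,x_d,x_{d+1}] is the parallelogram spanned by b_0 and t_{x_{d+1}}. Thus a d-dimensional type has base edges of length 2·3^{-d}. A box type T matches a piece P if P can be packed into T and area(T) ≤ 6·area(P) (such a type exists for every such P). A type is suitable for P if it is an ancestor (including itself) in the tree of a type matching P. Algorithm OnlinePacker: space in the strip is allocated for boxes of the various types; each box of type T contains either a single piece that T matches, or one, two or three boxes whose types are children of T. When a piece P arrives: if there exists an allocated box B_1 whose type T_1 is suitable for P (with T_1,...,T_k the tree path from T_1 to a type T_k matching P) and B_1 has room for one more box of type T_2, choose such a B_1 as small as possible (maximum dimension); then for i = 1,...,k-1 allocate in B_i a new empty box B_{i+1} of type T_{i+1} placed as far left in B_i as possible, and finally place P in B_k. If no such B_1 exists, allocate a new box of the basic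 type as far left in the strip as possible (not overlapping already allocated boxes), call it B_1, and proceed the same way. A d-dimensional box is near-empty if exactly one (d+1)-dimensional box is allocated in it. *)

theory Defs
  imports "HOL-Analysis.Analysis"
begin

text \<open>The plane is real \<times> real; first coordinate horizontal, second vertical.
  The strip has height 1, is bounded on the left by x = 0 and unbounded to the right.\<close>

definition strip :: "(real \<times> real) set" where
  "strip = {p. 0 \<le> fst p \<and> 0 \<le> snd p \<and> snd p \<le> 1}"

definition shift :: "real \<times> real \<Rightarrow> (real \<times> real) set \<Rightarrow> (real \<times> real) set" where
  "shift v S = (\<lambda>p. v + p) ` S"

definition idisj :: "(real \<times> real) set \<Rightarrow> (real \<times> real) set \<Rightarrow> bool" where
  "idisj A B \<longleftrightarrow> interior A \<inter> interior B = {}"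

definition area :: "(real \<times> real) set \<Rightarrow> real" where
  "area S = measure lborel S"

definition is_hpar :: "(real \<times> real) set \<Rightarrow> bool" where
  "is_hpar P \<longleftrightarrow> (\<exists>a c w s. w > 0 \<and>
      P = convex hull {(a, c), (a + w, c), (a + s, c + 1), (a + s + w, c + 1)})"

definition pwidth :: "(real \<times> real) set \<Rightarrow> real" where
  "pwidth P = (SUP p\<in>P. fst p) - (INF p\<in>P. fst p)"

definition packs_into :: "(real \<times> real) set \<Rightarrow> (real \<times> real) set \<Rightarrow> bool" where
  "packs_into P S \<longleftrightarrow> (\<exists>v. shift v P \<subseteq> S)"

definition valid_type :: "int list \<Rightarrow> bool" where
  "valid_type T \<longleftrightarrow> set T \<subseteq> {-1, 0, 1}"

text \<open>Edges of a type: ((bottom left, bottom right), (top left, top right)).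
  The child T @ [x] is spanned by the middle third of the bottom edge and the
  x-th third (x = -1, 0, +1 from left to right) of the top edge.\<close>
definition child_edges ::
  "(real \<times> real) \<times> (real \<times> real) \<Rightarrow> int \<Rightarrow> (real \<times> real) \<times> (real \<times> real)" where
  "child_edges e x =
     (let b = fst e; t = snd e; L = (snd b - fst b) / 3; M = (snd t - fst t) / 3
      in ((fst b + L, fst b + 2 * L),
          (fst t + (of_int x + 1) * M, fst t + (of_int x + 2) * M)))"

definition type_edges :: "int list \<Rightarrow> (real \<times> real) \<times> (real \<times> real)" where
  "type_edges T = foldl child_edges ((0, 2), (0, 2)) T"

text \<open>Canonical copy of the box type (bottom edge at height 0, top edge at height 1);
  the basic type [] is the rectangle [0,2] \<times> [0,1].\<close>
definition type_shape :: "int list \<Rightarrow> (real \<times> real) set" where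
  "type_shape T = (let b = fst (type_edges T); t = snd (type_edges T) in
     convex hull {(fst b, 0), (snd b, 0), (fst t, 1), (snd t, 1)})"

definition placed :: "int list \<Rightarrow> real \<times> real \<Rightarrow> (real \<times> real) set" where
  "placed T v = shift v (type_shape T)"

definition matches :: "int list \<Rightarrow> (real \<times> real) set \<Rightarrow> bool" where
  "matches T P \<longleftrightarrow> valid_type T \<and> packs_into P (type_shape T)
      \<and> area (type_shape T) \<le> 6 * area P"

text \<open>An allocated box: its type, its translation vector, and its parent box
  (None for boxes of the basic type allocated directly in the strip).
  Boxes are identified by their index in the list of allocated boxes;
  pieces are recorded with their placed position and the index of the box containing them.\<close>
record box =
  btype :: "int list"
  bpos :: "real \<times> real"
  bparent :: "nat option"

record pstate =
  boxes :: "box list"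
  pieces :: "((real \<times> real) set \<times> nat) list"

definition box_set :: "pstate \<Rightarrow> nat \<Rightarrow> (real \<times> real) set" where
  "box_set st i = placed (btype (boxes st ! i)) (bpos (boxes st ! i))"

definition children :: "pstate \<Rightarrow> nat \<Rightarrow> nat set" where
  "children st i = {j. j < length (boxes st) \<and> bparent (boxes st ! j) = Some i}"

definition has_piece :: "pstate \<Rightarrow> nat \<Rightarrow> bool" where
  "has_piece st i \<longleftrightarrow> (\<exists>q\<in>set (pieces st). snd q = i)"

definition near_empty :: "pstate \<Rightarrow> nat \<Rightarrow> bool" where
  "near_empty st i \<longleftrightarrow> card (children st i) = 1"

definition add_box :: "pstate \<Rightarrow> int list \<Rightarrow> real \<times> real \<Rightarrow> nat option \<Rightarrow> pstate" where
  "add_box st T v p = st\<lparr>boxes := boxes st @ [\<lparr>btype = T, bpos = v, bparent = p\<rparr>]\<rparr>"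

definition add_piece :: "pstate \<Rightarrow> (real \<times> real) set \<Rightarrow> nat \<Rightarrow> pstate" where
  "add_piece st Q i = st\<lparr>pieces := pieces st @ [(Q, i)]\<rparr>"

definition fits_child :: "pstate \<Rightarrow> nat \<Rightarrow> int list \<Rightarrow> real \<times> real \<Rightarrow> bool" where
  "fits_child st i T v \<longleftrightarrow> placed T v \<subseteq> box_set st i
     \<and> (\<forall>j\<in>children st i. idisj (placed T v) (box_set st j))"

definition leftmost_child :: "pstate \<Rightarrow> nat \<Rightarrow> int list \<Rightarrow> real \<times> real \<Rightarrow> bool" where
  "leftmost_child st i T v \<longleftrightarrow> fits_child st i T v
     \<and> (\<forall>v'. fits_child st i T v' \<longrightarrow> fst v \<le> fst v')"

definition fits_strip :: "pstate \<Rightarrow> real \<times> real \<Rightarrow> bool" where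
  "fits_strip st v \<longleftrightarrow> placed [] v \<subseteq> strip
     \<and> (\<forall>j < length (boxes st). idisj (placed [] v) (box_set st j))"

definition leftmost_strip :: "pstate \<Rightarrow> real \<times> real \<Rightarrow> bool" where
  "leftmost_strip st v \<longleftrightarrow> fits_strip st v \<and> (\<forall>v'. fits_strip st v' \<longrightarrow> fst v \<le> fst v')"

text \<open>(i, Tk) is a candidate for B_1: box i is allocated, holds no piece, its type T_1 is a
  proper ancestor of the matching type Tk, and it has room for one more box of type T_2.\<close>
definition candidate :: "pstate \<Rightarrow> (real \<times> real) set \<Rightarrow> nat \<Rightarrow> int list \<Rightarrow> bool" where
  "candidate st P i Tk \<longleftrightarrow> i < length (boxes st) \<and> \<not> has_piece st i \<and> matches Tk P
     \<and> take (length (btype (boxes st ! i))) Tk = btype (boxes st ! i)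
     \<and> length (btype (boxes st ! i)) < length Tk
     \<and> (\<exists>v. fits_child st i (take (Suc (length (btype (boxes st ! i)))) Tk) v)"

inductive alloc_chain :: "pstate \<Rightarrow> nat \<Rightarrow> int list list \<Rightarrow> pstate \<Rightarrow> nat \<Rightarrow> bool" where
  nil: "alloc_chain st p [] st p"
| cons: "leftmost_child st p T v \<Longrightarrow>
         alloc_chain (add_box st T v (Some p)) (length (boxes st)) Ts st' q \<Longrightarrow>
         alloc_chain st p (T # Ts) st' q"

text \<open>One step of OnlinePacker on arriving piece P (all unspecified tie-breaking is
  nondeterministic).\<close>
inductive op_step :: "pstate \<Rightarrow> (real \<times> real) set \<Rightarrow> pstate \<Rightarrow> bool" where
  existing:
  "candidate st P i Tk \<Longrightarrow>
   (\<forall>i' Tk'. candidate st P i' Tk' \<longrightarrow>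
        length (btype (boxes st ! i')) \<le> length (btype (boxes st ! i))) \<Longrightarrow>
   alloc_chain st i (map (\<lambda>j. take j Tk) [Suc (length (btype (boxes st ! i)))..<Suc (length Tk)])
       st1 q \<Longrightarrow>
   shift u P \<subseteq> box_set st1 q \<Longrightarrow>
   op_step st P (add_piece st1 (shift u P) q)"
| new:
  "\<not> (\<exists>i Tk. candidate st P i Tk) \<Longrightarrow>
   leftmost_strip st v \<Longrightarrow>
   matches Tk P \<Longrightarrow>
   alloc_chain (add_box st [] v None) (length (boxes st)) (map (\<lambda>j. take j Tk) [1..<Suc (length Tk)])
       st1 q \<Longrightarrow>
   shift u P \<subseteq> box_set st1 q \<Longrightarrow>
   op_step st P (add_piece st1 (shift u P) q)"

inductive reachable :: "pstate \<Rightarrow> bool" where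
  init: "reachable \<lparr>boxes = [], pieces = []\<rparr>"
| step: "reachable st \<Longrightarrow> is_hpar P \<Longrightarrow> pwidth P \<le> 1 \<Longrightarrow> op_step st P st' \<Longrightarrow> reachable st'"

end

theory Submission
  imports Defs
begin

(* A near-empty box of type T whose only child has type T @ [x] still has room for a child of
   type T @ [y] for every y, except y = -x when x ~= 0: the child was put as far left as
   possible, so at least a third of the base and of the top edge is free on its right. OnlinePacker
   chooses the deepest suitable box with room, so it allocates a new box of type T with a child
   of type T @ [y] only when no earlier box of type T without a piece has room for T @ [y]. Hence
   the children of any two near-empty boxes of type T point in opposite nonzero directions,
   which three boxes cannot do. *)

section \<open>Horizontal parallelograms\<close>

definition hpar :: "real \<Rightarrow> real \<Rightarrow> real \<Rightarrow> real \<Rightarrow> (real \<times> real) set" where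
  "hpar a c w s = {p. c \<le> snd p \<and> snd p \<le> c + 1
     \<and> a + s * (snd p - c) \<le> fst p \<and> fst p \<le> a + s * (snd p - c) + w}"

lemma convex_hpar: "convex (hpar a c w s)"
proof -
  have "hpar a c w s = {p. (0, -1) \<bullet> p \<le> - c} \<inter> {p. (0, 1) \<bullet> p \<le> c + 1}
      \<inter> {p. (-1, s) \<bullet> p \<le> s * c - a} \<inter> {p. (1, - s) \<bullet> p \<le> a - s * c + w}"
    by (auto simp: hpar_def algebra_simps)
  then show ?thesis
    by (simp add: convex_Int convex_halfspace_le)
qed

lemma convex_hull_hpar:
  assumes "w > 0"
  shows "convex hull {(a, c), (a + w, c), (a + s, c + 1), (a + s + w, c + 1)} = hpar a c w s"
    (is "convex hull ?V = _")
proof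
  show "convex hull ?V \<subseteq> hpar a c w s"
    using assms by (intro hull_minimal convex_hpar) (auto simp: hpar_def)
  show "hpar a c w s \<subseteq> convex hull ?V"
  proof
    fix p assume p: "p \<in> hpar a c w s"
    obtain x y where xy: "p = (x, y)" by (cases p)
    define h where "h = y - c"
    define r where "r = (x - a - s * h) / w"
    have h: "0 \<le> h" "h \<le> 1" and r: "0 \<le> r" "r \<le> 1"
      using p assms unfolding xy hpar_def h_def r_def by (auto simp: field_simps)
    have cvx: "convex (convex hull ?V)" by (rule convex_convex_hull)
    define q0 where "q0 = (1 - r) *\<^sub>R (a, c) + r *\<^sub>R (a + w, c)"
    define q1 where "q1 = (1 - r) *\<^sub>R (a + s, c + 1) + r *\<^sub>R (a + s + w, c + 1)"
    have "q0 \<in> convex hull ?V" "q1 \<in> convex hull ?V"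
      unfolding q0_def q1_def by (intro convexD[OF cvx]; use r in \<open>auto intro: hull_inc\<close>)+
    then have "(1 - h) *\<^sub>R q0 + h *\<^sub>R q1 \<in> convex hull ?V"
      using h by (intro convexD[OF cvx]) auto
    moreover have "(1 - h) *\<^sub>R q0 + h *\<^sub>R q1 = p"
      unfolding q0_def q1_def xy using assms by (simp add: r_def h_def field_simps)
    ultimately show "p \<in> convex hull ?V" by simp
  qed
qed

lemma shift_hpar: "shift v (hpar a c w s) = hpar (a + fst v) (c + snd v) w s"
proof -
  have "p \<in> (\<lambda>p. v + p) ` hpar a c w s" if "p \<in> hpar (a + fst v) (c + snd v) w s" for p
  proof (rule rev_image_eqI)
    show "p - v \<in> hpar a c w s" using that by (auto simp: hpar_def algebra_simps)
  qed simp
  then show ?thesis unfolding shift_def by (auto simp: hpar_def algebra_simps)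
qed

lemma hpar_subset_iff:
  assumes "w' \<ge> 0"
  shows "hpar a' c' w' s' \<subseteq> hpar a c w s \<longleftrightarrow>
    c' = c \<and> a \<le> a' \<and> a' + w' \<le> a + w \<and> a + s \<le> a' + s' \<and> a' + s' + w' \<le> a + s + w"
    (is "_ \<longleftrightarrow> ?corners")
proof
  assume sub: "hpar a' c' w' s' \<subseteq> hpar a c w s"
  have "{(a', c'), (a' + w', c'), (a' + s', c' + 1), (a' + s' + w', c' + 1)} \<subseteq> hpar a' c' w' s'"
    using assms by (auto simp: hpar_def)
  then have "{(a', c'), (a' + w', c'), (a' + s', c' + 1), (a' + s' + w', c' + 1)} \<subseteq> hpar a c w s"
    using sub by (rule subset_trans)
  then have "(a', c') \<in> hpar a c w s" "(a' + w', c') \<in> hpar a c w s"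
    "(a' + s', c' + 1) \<in> hpar a c w s" "(a' + s' + w', c' + 1) \<in> hpar a c w s"
    by simp_all
  moreover from this have "c' = c" by (simp add: hpar_def)
  ultimately show ?corners by (simp add: hpar_def)
next
  assume ?corners
  show "hpar a' c' w' s' \<subseteq> hpar a c w s"
  proof
    fix p assume p: "p \<in> hpar a' c' w' s'"
    define h where "h = snd p - c"
    have h: "0 \<le> h" "h \<le> 1" using p \<open>?corners\<close> by (auto simp: hpar_def h_def)
    \<comment> \<open>the edge inequalities at heights 0 and 1 interpolate linearly in between\<close>
    have "(1 - h) * (a - a') + h * (a + s - a' - s') \<le> 0"
      "(1 - h) * (a' + w' - a - w) + h * (a' + s' + w' - a - s - w) \<le> 0"
      using h \<open>?corners\<close> by (intro add_nonpos_nonpos mult_nonneg_nonpos; simp)+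
    then show "p \<in> hpar a c w s"
      using p \<open>?corners\<close> by (auto simp: hpar_def h_def algebra_simps)
  qed
qed

lemma idisj_hpar:
  assumes "a1 + w1 \<le> a2" "a1 + s1 + w1 \<le> a2 + s2"
  shows "idisj (hpar a1 c w1 s1) (hpar a2 c w2 s2)"
proof -
  have "hpar a1 c w1 s1 \<inter> hpar a2 c w2 s2 \<subseteq> {p. (1, - s2) \<bullet> p = a2 - s2 * c}"
  proof
    fix p assume p: "p \<in> hpar a1 c w1 s1 \<inter> hpar a2 c w2 s2"
    define h where "h = snd p - c"
    have h: "0 \<le> h" "h \<le> 1" using p by (auto simp: hpar_def h_def)
    have "(1 - h) * (a1 + w1 - a2) + h * (a1 + s1 + w1 - a2 - s2) \<le> 0"
      using h assms by (intro add_nonpos_nonpos mult_nonneg_nonpos) auto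
    then have "a1 + s1 * h + w1 \<le> a2 + s2 * h" by (simp add: algebra_simps)
    moreover have "(1, - s2) \<bullet> p = fst p - s2 * snd p" by (cases p) simp
    ultimately show "p \<in> {p. (1, - s2) \<bullet> p = a2 - s2 * c}"
      using p by (auto simp: hpar_def h_def algebra_simps)
  qed
  then have "interior (hpar a1 c w1 s1 \<inter> hpar a2 c w2 s2)
      \<subseteq> interior {p. (1, - s2) \<bullet> p = a2 - s2 * c}"
    by (rule interior_mono)
  also have "\<dots> = {}" by (rule interior_hyperplane) (simp add: zero_prod_def)
  finally show ?thesis unfolding idisj_def by (simp add: interior_Int)
qed

lemma idisj_commute: "idisj A B \<longleftrightarrow> idisj B A"
  unfolding idisj_def by blast

lemma third_hpar_subset_iff:
  assumes "u > 0" "x \<in> {-1, 0, 1}"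
  shows "hpar b c' u (s + of_int x * u) \<subseteq> hpar a c (3 * u) s \<longleftrightarrow>
    c' = c \<and> a + (if x = -1 then u else 0) \<le> b \<and> b \<le> a + (if x = 1 then u else 2 * u)"
  using assms by (subst hpar_subset_iff) auto

lemma idisj_third_hpar:
  assumes "u > 0" "x \<in> {-1, 0, 1}" "y \<in> {-1, 0, 1}" "x = 0 \<or> y \<noteq> - x"
  shows "idisj (hpar (a + (if x = -1 then u else 0)) c u (s + of_int x * u))
    (hpar (a + (if y = 1 then u else 2 * u)) c u (s + of_int y * u))"
  using assms by (intro idisj_hpar) auto

definition type_left :: "int list \<Rightarrow> real" where
  "type_left T = fst (fst (type_edges T))"

definition type_shear :: "int list \<Rightarrow> real" where
  "type_shear T = fst (snd (type_edges T)) - type_left T"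

definition type_width :: "int list \<Rightarrow> real" where
  "type_width T = 2 / 3 ^ length T"

lemma type_width_pos: "type_width T > 0"
  by (simp add: type_width_def)

lemma type_width_snoc: "type_width (T @ [x]) = type_width T / 3"
  by (simp add: type_width_def)

lemma type_edges_snoc: "type_edges (T @ [x]) = child_edges (type_edges T) x"
  by (simp add: type_edges_def)

lemma type_edges_widths:
  "snd (fst (type_edges T)) = type_left T + type_width T"
  "snd (snd (type_edges T)) = fst (snd (type_edges T)) + type_width T"
  by (induction T rule: rev_induct)
    (simp_all add: type_edges_def type_left_def type_width_def child_edges_def Let_def field_simps)

lemma type_left_snoc: "type_left (T @ [x]) = type_left T + type_width (T @ [x])"
  and type_shear_snoc: "type_shear (T @ [x]) = type_shear T + of_int x * type_width (T @ [x])"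
  using type_edges_widths[of T]
  by (simp_all add: type_left_def type_shear_def type_width_def type_edges_snoc child_edges_def
      Let_def field_simps)

lemma type_shape_hpar: "type_shape T = hpar (type_left T) 0 (type_width T) (type_shear T)"
proof -
  obtain b t where e: "type_edges T = (b, t)" by (cases "type_edges T")
  have "type_shape T = convex hull {(type_left T, 0), (type_left T + type_width T, 0),
      (type_left T + type_shear T, 0 + 1), (type_left T + type_shear T + type_width T, 0 + 1)}"
    using type_edges_widths[of T] e
    by (simp add: type_shape_def type_left_def type_shear_def algebra_simps)
  also have "\<dots> = hpar (type_left T) 0 (type_width T) (type_shear T)"
    by (rule convex_hull_hpar) (rule type_width_pos)
  finally show ?thesis .
qed

lemma placed_hpar:
  "placed T v = hpar (type_left T + fst v) (snd v) (type_width T) (type_shear T)"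
  by (simp add: placed_def type_shape_hpar shift_hpar)

section \<open>Room left by a first child\<close>

lemma boxes_add_piece [simp]: "boxes (add_piece st Q q) = boxes st"
  by (simp add: add_piece_def)

lemma children_add_piece [simp]: "children (add_piece st Q q) = children st"
  by (rule ext) (simp add: children_def)

lemma length_boxes_add_box [simp]: "length (boxes (add_box st T v R)) = Suc (length (boxes st))"
  by (simp add: add_box_def)

lemma nth_boxes_add_box:
  "i < length (boxes st) \<Longrightarrow> boxes (add_box st T v R) ! i = boxes st ! i"
  "boxes (add_box st T v R) ! length (boxes st) = \<lparr>btype = T, bpos = v, bparent = R\<rparr>"
  by (simp_all add: add_box_def nth_append)

lemma children_add_box:
  "children (add_box st T v R) i = children st i \<union> (if R = Some i then {length (boxes st)} else {})"
  by (auto simp: children_def nth_boxes_add_box less_Suc_eq)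

definition leaves_room :: "pstate \<Rightarrow> nat \<Rightarrow> nat \<Rightarrow> bool" where
  "leaves_room st i c \<longleftrightarrow> (\<exists>x\<in>{-1, 0, 1}. btype (boxes st ! c) = btype (boxes st ! i) @ [x]
     \<and> (\<forall>y\<in>{-1, 0, 1}. x = 0 \<or> y \<noteq> - x \<longrightarrow> (\<exists>v. fits_child st i (btype (boxes st ! i) @ [y]) v)))"

lemma leaves_room_add_piece [simp]: "leaves_room (add_piece st Q q) = leaves_room st"
  by (intro ext) (simp add: leaves_room_def fits_child_def box_set_def)

lemma leaves_room_no_fit:
  assumes "leaves_room st i c" "y \<in> {-1, 0, 1}"
    and "\<not> (\<exists>v. fits_child st i (btype (boxes st ! i) @ [y]) v)"
  shows "last (btype (boxes st ! c)) \<noteq> 0 \<and> y = - last (btype (boxes st ! c))"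
  using assms unfolding leaves_room_def by force

lemma first_child_leaves_room:
  assumes "children st p = {}" "p < length (boxes st)" "x \<in> {-1, 0, 1}"
    and "leftmost_child st p (btype (boxes st ! p) @ [x]) v"
  shows "leaves_room (add_box st (btype (boxes st ! p) @ [x]) v (Some p)) p (length (boxes st))"
proof -
  define T where "T = btype (boxes st ! p)"
  define st' where "st' = add_box st (T @ [x]) v (Some p)"
  define n where "n = length (boxes st)"
  define a where "a = type_left T + fst (bpos (boxes st ! p))"
  define c where "c = snd (bpos (boxes st ! p))"
  define u where "u = type_width (T @ [x])"
  define s where "s = type_shear T"
  define pos where "pos b = (b - type_left T - u, c)" for b
  have u: "u > 0" by (simp add: u_def type_width_pos)
  have parent: "box_set st p = hpar a c (3 * u) s"
    by (simp add: box_set_def placed_hpar a_def c_def u_def s_def T_def type_width_snoc)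
  have child: "placed (T @ [y]) w = hpar (type_left T + u + fst w) (snd w) u (s + of_int y * u)"
    for y w
    by (simp add: placed_hpar type_left_snoc type_shear_snoc u_def s_def type_width_def)
  note inside = third_hpar_subset_iff[OF u]
  have fits_first: "fits_child st p (T @ [x]) w \<longleftrightarrow> placed (T @ [x]) w \<subseteq> box_set st p" for w
    using assms(1) by (simp add: fits_child_def)
  have "fits_child st p (T @ [x]) (pos (a + (if x = -1 then u else 0)))"
    using assms(3) u by (simp add: fits_first child parent inside pos_def)
  then have "fst v \<le> fst (pos (a + (if x = -1 then u else 0)))"
    using assms(4) unfolding leftmost_child_def T_def by blast
  moreover have "placed (T @ [x]) v \<subseteq> box_set st p"
    using assms(4) fits_first unfolding leftmost_child_def T_def by blast
  then have "snd v = c" "a + (if x = -1 then u else 0) \<le> type_left T + u + fst v"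
    using assms(3) by (simp_all add: child parent inside)
  ultimately have "v = pos (a + (if x = -1 then u else 0))"
    by (simp add: pos_def prod_eq_iff)
  then have first: "box_set st' n = hpar (a + (if x = -1 then u else 0)) c u (s + of_int x * u)"
    by (simp add: st'_def n_def box_set_def nth_boxes_add_box child pos_def)
  have box_set': "box_set st' p = box_set st p"
    using assms(2) by (simp add: st'_def box_set_def nth_boxes_add_box)
  \<comment> \<open>a further child fits flush right unless it points opposite to the first one\<close>
  have "fits_child st' p (T @ [y]) (pos (a + (if y = 1 then u else 2 * u)))"
    if "y \<in> {-1, 0, 1}" "x = 0 \<or> y \<noteq> - x" for y
    using that u idisj_third_hpar[OF u assms(3) that, of a c s] assms(1)
    by (simp add: fits_child_def st'_def children_add_box first[unfolded st'_def n_def]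
        box_set'[unfolded st'_def] parent child inside pos_def idisj_commute)
  then have "\<exists>w. fits_child st' p (T @ [y]) w" if "y \<in> {-1, 0, 1}" "x = 0 \<or> y \<noteq> - x" for y
    using that by blast
  then show ?thesis
    using assms(2,3) unfolding leaves_room_def
    by (auto simp: st'_def n_def T_def nth_boxes_add_box)
qed

definition parents_precede :: "pstate \<Rightarrow> bool" where
  "parents_precede st \<longleftrightarrow>
     (\<forall>j<length (boxes st). \<forall>p. bparent (boxes st ! j) = Some p \<longrightarrow> p < j)"

lemma children_subset: "children st i \<subseteq> {..<length (boxes st)}"
  by (auto simp: children_def)

lemma children_fresh:
  "parents_precede st \<Longrightarrow> length (boxes st) \<le> i \<Longrightarrow> children st i = {}"
  by (fastforce simp: parents_precede_def children_def)

lemma parents_precede_add_box: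
  "parents_precede st \<Longrightarrow> (\<forall>r. R = Some r \<longrightarrow> r < length (boxes st))
    \<Longrightarrow> parents_precede (add_box st T v R)"
  by (auto simp: parents_precede_def nth_boxes_add_box less_Suc_eq)

definition appends_chain :: "pstate \<Rightarrow> pstate \<Rightarrow> nat option \<Rightarrow> int list list \<Rightarrow> bool" where
  "appends_chain st st' R Ts \<longleftrightarrow> pieces st' = pieces st
     \<and> length (boxes st') = length (boxes st) + length Ts
     \<and> (\<forall>k<length (boxes st). boxes st' ! k = boxes st ! k)
     \<and> (\<forall>k<length Ts. btype (boxes st' ! (length (boxes st) + k)) = Ts ! k
          \<and> bparent (boxes st' ! (length (boxes st) + k))
              = (if k = 0 then R else Some (length (boxes st) + k - 1)))"

lemma appends_chainD:
  assumes "appends_chain st st' R Ts"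
  shows "pieces st' = pieces st" "length (boxes st') = length (boxes st) + length Ts"
    and "k < length (boxes st) \<Longrightarrow> boxes st' ! k = boxes st ! k"
    and "k < length Ts \<Longrightarrow> btype (boxes st' ! (length (boxes st) + k)) = Ts ! k"
    and "k < length Ts \<Longrightarrow> bparent (boxes st' ! (length (boxes st) + k))
           = (if k = 0 then R else Some (length (boxes st) + k - 1))"
  using assms by (simp_all add: appends_chain_def)

lemma appends_chain_add_box: "appends_chain st (add_box st T v R) R [T]"
  by (simp add: appends_chain_def nth_boxes_add_box) (simp add: add_box_def)

lemma appends_chain_Cons:
  assumes "appends_chain st st1 R [T]" "appends_chain st1 st2 (Some (length (boxes st))) Ts"
  shows "appends_chain st st2 R (T # Ts)"
  unfolding appends_chain_def
proof (intro conjI allI impI)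
  fix k assume k: "k < length (T # Ts)"
  show "btype (boxes st2 ! (length (boxes st) + k)) = (T # Ts) ! k"
    and "bparent (boxes st2 ! (length (boxes st) + k))
      = (if k = 0 then R else Some (length (boxes st) + k - 1))"
    using assms k by (cases k; simp add: appends_chain_def)+
qed (use assms in \<open>simp_all add: appends_chain_def\<close>)

lemma alloc_chain_appends_chain:
  "alloc_chain st p Ts st' q \<Longrightarrow> appends_chain st st' (Some p) Ts
    \<and> q = (if Ts = [] then p else length (boxes st) + length Ts - 1)"
proof (induction rule: alloc_chain.induct)
  case (nil st p)
  then show ?case by (simp add: appends_chain_def)
next
  case (cons st p T v Ts st' q)
  then show ?case
    using appends_chain_Cons[OF appends_chain_add_box, of st T v "Some p" st' Ts]
    by simp
qed

lemma leaves_room_appends_chain: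
  assumes "appends_chain st st' R Ts" "i < length (boxes st)" "c < length (boxes st)"
    and "children st' i = children st i"
  shows "leaves_room st' i c \<longleftrightarrow> leaves_room st i c"
proof -
  note same = appends_chainD(3)[OF assms(1)]
  have "box_set st' j = box_set st j" if "j \<in> insert i (children st i)" for j
    using that assms(2) children_subset[of st i] by (auto simp: box_set_def same)
  then have "fits_child st' i T w \<longleftrightarrow> fits_child st i T w" for T w
    by (simp add: fits_child_def assms(4))
  then show ?thesis
    by (simp add: leaves_room_def same assms(2,3))
qed

lemma children_appends_chain_old:
  assumes "appends_chain st st' R Ts" "i < length (boxes st)"
  shows "children st' i = children st i \<union> (if R = Some i \<and> Ts \<noteq> [] then {length (boxes st)} else {})"
proof -
  have "j \<in> children st' i \<longleftrightarrow> j \<in> children st i" if "j < length (boxes st)" for j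
    using assms that by (auto simp: appends_chain_def children_def)
  moreover have "j \<in> children st' i \<longleftrightarrow> R = Some i \<and> Ts \<noteq> [] \<and> j = length (boxes st)"
    if "length (boxes st) \<le> j" for j
    using assms that by (auto simp: appends_chain_def children_def split: if_splits dest!: le_Suc_ex)
  ultimately show ?thesis
    using children_subset[of st i] by (auto simp: not_less[symmetric])
qed

lemma children_appends_chain_new:
  assumes "appends_chain st st' R Ts" "parents_precede st"
    and "\<forall>r. R = Some r \<longrightarrow> r < length (boxes st)" "k < length Ts"
  shows "children st' (length (boxes st) + k)
    = (if Suc k < length Ts then {length (boxes st) + Suc k} else {})"
proof -
  have "j \<notin> children st' (length (boxes st) + k)" if "j < length (boxes st)" for j
    using assms that by (fastforce simp: appends_chain_def children_def parents_precede_def)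
  moreover have "j \<in> children st' (length (boxes st) + k)
      \<longleftrightarrow> Suc k < length Ts \<and> j = length (boxes st) + Suc k" if "length (boxes st) \<le> j" for j
    using assms that
    by (fastforce simp: appends_chain_def children_def split: if_splits dest!: le_Suc_ex)
  ultimately show ?thesis by (auto simp: not_less[symmetric])
qed

fun child_chain :: "int list \<Rightarrow> int list list \<Rightarrow> bool" where
  "child_chain T [] \<longleftrightarrow> True"
| "child_chain T (T' # Ts) \<longleftrightarrow> (\<exists>x\<in>{-1, 0, 1}. T' = T @ [x]) \<and> child_chain T' Ts"

lemma child_chain_prefixes:
  assumes "valid_type Tk" "a \<le> length Tk"
  shows "child_chain (take a Tk) (map (\<lambda>j. take j Tk) [Suc a..<Suc (length Tk)])"
  using assms(2)
proof (induction "length Tk - a" arbitrary: a)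
  case 0
  then show ?case by simp
next
  case (Suc l)
  then have a: "a < length Tk" by simp
  have IH: "child_chain (take (Suc a) Tk) (map (\<lambda>j. take j Tk) [Suc (Suc a)..<Suc (length Tk)])"
    by (rule Suc.hyps(1)) (use Suc.hyps(2) in simp_all)
  have "[Suc a..<Suc (length Tk)] = Suc a # [Suc (Suc a)..<Suc (length Tk)]"
    using a by (simp add: upt_conv_Cons)
  moreover have "take (Suc a) Tk = take a Tk @ [Tk ! a]"
    using a by (simp add: take_Suc_conv_app_nth)
  moreover have "Tk ! a \<in> {-1, 0, 1}"
    using assms(1) a nth_mem unfolding valid_type_def by blast
  ultimately show ?case
    using IH by (simp only: list.map child_chain.simps) blast
qed

lemma alloc_chain_leaves_room:
  assumes "alloc_chain st p Ts st' q" "child_chain (btype (boxes st ! p)) Ts"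
    and "p < length (boxes st)" "parents_precede st"
  shows "(Ts \<noteq> [] \<longrightarrow> children st p = {} \<longrightarrow> leaves_room st' p (length (boxes st)))
    \<and> (\<forall>k. Suc k < length Ts
         \<longrightarrow> leaves_room st' (length (boxes st) + k) (length (boxes st) + Suc k))"
  using assms
proof (induction rule: alloc_chain.induct)
  case (nil st p)
  then show ?case by simp
next
  case (cons st p T v Ts st' q)
  define n where "n = length (boxes st)"
  define st1 where "st1 = add_box st T v (Some p)"
  obtain x where x: "x \<in> {-1, 0, 1}" "T = btype (boxes st ! p) @ [x]"
    and chain: "child_chain T Ts"
    using cons.prems(1) by auto
  have appended: "appends_chain st1 st' (Some n) Ts"
    using alloc_chain_appends_chain[OF cons.hyps(2)] by (simp add: st1_def n_def)
  have IH: "(Ts \<noteq> [] \<longrightarrow> children st1 n = {} \<longrightarrow> leaves_room st' n (Suc n))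
      \<and> (\<forall>k. Suc k < length Ts \<longrightarrow> leaves_room st' (Suc n + k) (Suc n + Suc k))"
    using cons.IH cons.prems chain
    by (simp add: st1_def n_def nth_boxes_add_box parents_precede_add_box)
  have "children st1 n = {}"
    using children_fresh[OF cons.prems(3)] cons.prems(2) by (simp add: st1_def n_def children_add_box)
  then have tail: "leaves_room st' (n + k) (n + Suc k)" if "Suc k < length (T # Ts)" for k
    using IH that by (cases k) auto
  have "leaves_room st' p n" if "children st p = {}"
  proof -
    have "leaves_room st1 p n"
      using first_child_leaves_room[OF that cons.prems(2) x(1)] cons.hyps(1) x(2)
      by (simp add: st1_def n_def)
    moreover have "children st' p = children st1 p"
      using children_appends_chain_old[OF appended] cons.prems(2) by (simp add: st1_def n_def)
    ultimately show ?thesis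
      using leaves_room_appends_chain[OF appended] cons.prems(2) by (simp add: st1_def n_def)
  qed
  then show ?case using tail by (simp add: n_def)
qed

section \<open>The invariant of OnlinePacker\<close>

definition pieces_exactly_in_leaves :: "pstate \<Rightarrow> bool" where
  "pieces_exactly_in_leaves st \<longleftrightarrow> (\<forall>q\<in>set (pieces st). snd q < length (boxes st))
     \<and> (\<forall>i<length (boxes st). has_piece st i \<longleftrightarrow> children st i = {})"

definition near_empty_leave_room :: "pstate \<Rightarrow> bool" where
  "near_empty_leave_room st \<longleftrightarrow>
     (\<forall>i<length (boxes st). \<forall>c. children st i = {c} \<longrightarrow> leaves_room st i c)"

definition near_empty_twins_opposite :: "pstate \<Rightarrow> bool" where
  "near_empty_twins_opposite st \<longleftrightarrow> (\<forall>i j ci cj. i < j \<longrightarrow> j < length (boxes st)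
     \<longrightarrow> btype (boxes st ! i) = btype (boxes st ! j)
     \<longrightarrow> children st i = {ci} \<longrightarrow> children st j = {cj}
     \<longrightarrow> last (btype (boxes st ! ci)) \<noteq> 0
         \<and> last (btype (boxes st ! cj)) = - last (btype (boxes st ! ci)))"

definition packer_invariant :: "pstate \<Rightarrow> bool" where
  "packer_invariant st \<longleftrightarrow> parents_precede st \<and> pieces_exactly_in_leaves st
     \<and> near_empty_leave_room st \<and> near_empty_twins_opposite st"

lemma packer_invariant_init: "packer_invariant \<lparr>boxes = [], pieces = []\<rparr>"
  by (simp add: packer_invariant_def parents_precede_def pieces_exactly_in_leaves_def
      near_empty_leave_room_def near_empty_twins_opposite_def)

lemma parents_precede_appends_chain:
  assumes "parents_precede st" "appends_chain st st' R Ts"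
    and "\<forall>r. R = Some r \<longrightarrow> r < length (boxes st)"
  shows "parents_precede st'"
  unfolding parents_precede_def
proof (intro allI impI)
  fix j p assume j: "j < length (boxes st')" and p: "bparent (boxes st' ! j) = Some p"
  show "p < j"
  proof (cases "j < length (boxes st)")
    case True
    then show ?thesis
      using assms(1) p appends_chainD(3)[OF assms(2)] by (auto simp: parents_precede_def)
  next
    case False
    then obtain k where "j = length (boxes st) + k" "k < length Ts"
      using j appends_chainD(2)[OF assms(2)] by (auto simp: not_less nat_le_iff_add)
    then show ?thesis
      using p assms(3) appends_chainD(5)[OF assms(2)] by (auto split: if_splits)
  qed
qed

lemma near_empty_appends_chain_old:
  assumes "pieces_exactly_in_leaves st" "appends_chain st st' R Ts"
    and "\<forall>r. R = Some r \<longrightarrow> \<not> has_piece st r"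
    and "i < length (boxes st)" "children st' i = {c}"
  shows "children st i = {c}"
proof (cases "R = Some i \<and> Ts \<noteq> []")
  case True
  then have "children st i \<noteq> {}"
    using assms(1,3,4) by (auto simp: pieces_exactly_in_leaves_def)
  moreover have "length (boxes st) \<notin> children st i"
    using children_subset[of st i] by auto
  ultimately show ?thesis
    using assms(5) children_appends_chain_old[OF assms(2,4)] True by auto
next
  case False
  then show ?thesis
    using assms(5) children_appends_chain_old[OF assms(2,4)] by (simp split: if_splits)
qed

lemma pieces_exactly_in_leaves_after_chain:
  assumes "pieces_exactly_in_leaves st" "parents_precede st" "appends_chain st st' R Ts" "Ts \<noteq> []"
    and R: "\<forall>r. R = Some r \<longrightarrow> r < length (boxes st) \<and> \<not> has_piece st r"
  shows "pieces_exactly_in_leaves (add_piece st' Q (length (boxes st) + length Ts - 1))"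
proof -
  define n where "n = length (boxes st)"
  define q where "q = n + length Ts - 1"
  note old = assms(1)[unfolded pieces_exactly_in_leaves_def, folded n_def]
  have q: "n \<le> q" "q < n + length Ts"
    using assms(4) by (cases Ts; simp add: q_def)+
  have pieces': "set (pieces (add_piece st' Q q)) = insert (Q, q) (set (pieces st))"
    by (simp add: add_piece_def appends_chainD(1)[OF assms(3)])
  then have has_piece': "has_piece (add_piece st' Q q) i \<longleftrightarrow> has_piece st i \<or> i = q" for i
    by (auto simp: has_piece_def)
  have "has_piece st i \<or> i = q \<longleftrightarrow> children st' i = {}" if i: "i < n + length Ts" for i
  proof (cases "i < n")
    case True
    then show ?thesis
      using old R q children_appends_chain_old[OF assms(3) True[unfolded n_def]]
      by (auto simp: n_def)
  next
    case False
    then obtain k where k: "i = n + k" "k < length Ts"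
      using i by (auto simp: not_less nat_le_iff_add)
    have "\<not> has_piece st i"
      using old False by (auto simp: has_piece_def)
    then show ?thesis
      using k children_appends_chain_new[OF assms(3,2)] R by (auto simp: n_def q_def)
  qed
  then have "pieces_exactly_in_leaves (add_piece st' Q q)"
    using old q appends_chainD(2)[OF assms(3)]
    by (auto simp: pieces_exactly_in_leaves_def pieces' has_piece' n_def)
  then show ?thesis by (simp add: q_def n_def)
qed

lemma near_empty_leave_room_appends_chain:
  assumes "near_empty_leave_room st" "pieces_exactly_in_leaves st" "parents_precede st"
    and "appends_chain st st' R Ts"
    and R: "\<forall>r. R = Some r \<longrightarrow> r < length (boxes st) \<and> \<not> has_piece st r"
    and new: "\<forall>k. Suc k < length Ts
      \<longrightarrow> leaves_room st' (length (boxes st) + k) (length (boxes st) + Suc k)"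
  shows "near_empty_leave_room st'"
  unfolding near_empty_leave_room_def
proof (intro allI impI)
  fix i c assume i: "i < length (boxes st')" and c: "children st' i = {c}"
  show "leaves_room st' i c"
  proof (cases "i < length (boxes st)")
    case True
    then have "children st i = {c}"
      using near_empty_appends_chain_old[OF assms(2,4)] R c by blast
    moreover from this have "c < length (boxes st)"
      using children_subset[of st i] by auto
    ultimately show ?thesis
      using leaves_room_appends_chain[OF assms(4) True] assms(1) True c
      by (simp add: near_empty_leave_room_def)
  next
    case False
    then obtain k where "i = length (boxes st) + k" "k < length Ts"
      using i appends_chainD(2)[OF assms(4)] by (auto simp: not_less nat_le_iff_add)
    then show ?thesis
      using c new children_appends_chain_new[OF assms(4,3)] R by (auto split: if_splits)
  qed
qed

lemma appends_chain_prefixes_types_distinct: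
  assumes "appends_chain st st' R (map (\<lambda>j. take j Tk) [lo..<Suc (length Tk)])"
    and "k' < k" "k < Suc (length Tk) - lo"
  shows "btype (boxes st' ! (length (boxes st) + k')) \<noteq> btype (boxes st' ! (length (boxes st) + k))"
proof -
  have "btype (boxes st' ! (length (boxes st) + k')) = take (lo + k') Tk"
    "btype (boxes st' ! (length (boxes st) + k)) = take (lo + k) Tk"
    using appends_chainD(4)[OF assms(1)] assms(2,3) by (simp_all del: upt_Suc)
  moreover have "length (take (lo + k') Tk) \<noteq> length (take (lo + k) Tk)"
    using assms(2,3) by simp
  ultimately show ?thesis by metis
qed

lemma near_empty_twins_opposite_appends_chain:
  assumes inv: "packer_invariant st"
    and chain: "appends_chain st st' R (map (\<lambda>j. take j Tk) [lo..<Suc (length Tk)])"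
    and R: "\<forall>r. R = Some r \<longrightarrow> r < length (boxes st) \<and> \<not> has_piece st r"
    and blocked: "\<forall>i<length (boxes st). \<forall>d. lo \<le> d \<longrightarrow> d < length Tk
      \<longrightarrow> btype (boxes st ! i) = take d Tk \<longrightarrow> \<not> has_piece st i
      \<longrightarrow> \<not> (\<exists>v. fits_child st i (take (Suc d) Tk) v)"
    and "valid_type Tk"
  shows "near_empty_twins_opposite st'"
  unfolding near_empty_twins_opposite_def
proof (intro allI impI)
  define n where "n = length (boxes st)"
  define K where "K = Suc (length Tk) - lo"
  note same = appends_chainD(3)[OF chain, folded n_def]
  have len: "length (boxes st') = n + K"
    using appends_chainD(2)[OF chain] by (simp add: n_def K_def del: upt_Suc)
  note leaves = inv[unfolded packer_invariant_def]
  have near_empty_old: "children st i = {c}" if "i < n" "children st' i = {c}" for i c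
    using near_empty_appends_chain_old[OF _ chain] leaves R that by (auto simp: n_def)
  fix i j ci cj
  assume ij: "i < j" and j: "j < length (boxes st')"
    and type: "btype (boxes st' ! i) = btype (boxes st' ! j)"
    and ci: "children st' i = {ci}" and cj: "children st' j = {cj}"
  show "last (btype (boxes st' ! ci)) \<noteq> 0
    \<and> last (btype (boxes st' ! cj)) = - last (btype (boxes st' ! ci))"
  proof (cases "j < n")
    case True
    then have "children st i = {ci}" "children st j = {cj}"
      using ij near_empty_old ci cj by auto
    moreover from this have "ci < n" "cj < n"
      using children_subset[of st] by (auto simp: n_def)
    ultimately show ?thesis
      using leaves ij True type same
      by (simp add: near_empty_twins_opposite_def n_def)
  next
    \<comment> \<open>j is new, so the old box i of its type had no room for the child type of j\<close>
    case False
    then obtain k where k: "j = n + k" "k < K"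
      using j len by (auto simp: not_less nat_le_iff_add)
    have cj_new: "Suc k < K" "cj = n + Suc k"
      using cj children_appends_chain_new[OF chain _ _, of k] k leaves R
      by (auto simp: n_def K_def packer_invariant_def split: if_splits simp del: upt_Suc)
    define d where "d = lo + k"
    have d: "d < length Tk" "btype (boxes st' ! j) = take d Tk"
      "btype (boxes st' ! cj) = take (Suc d) Tk"
      using k cj_new appends_chainD(4)[OF chain, of k] appends_chainD(4)[OF chain, of "Suc k"]
      by (simp_all add: d_def n_def K_def del: upt_Suc)
    have "i < n"
    proof (rule ccontr)
      assume "\<not> i < n"
      then obtain k' where "i = n + k'" "k' < k"
        using ij k by (auto simp: not_less nat_le_iff_add)
      then show False
        using appends_chain_prefixes_types_distinct[OF chain] type k by (simp add: n_def K_def)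
    qed
    then have "children st i = {ci}"
      using near_empty_old ci by blast
    moreover from this have "ci < n" "\<not> has_piece st i"
      using children_subset[of st i] leaves \<open>i < n\<close>
      by (auto simp: n_def packer_invariant_def pieces_exactly_in_leaves_def)
    moreover have "Tk ! d \<in> {-1, 0, 1}"
      using assms(5) d(1) nth_mem unfolding valid_type_def by blast
    ultimately show ?thesis
      using leaves_room_no_fit[of st i ci "Tk ! d"] blocked leaves \<open>i < n\<close> type d same
      by (auto simp: d_def n_def near_empty_leave_room_def take_Suc_conv_app_nth)
  qed
qed

lemma packer_invariant_after_chain:
  assumes inv: "packer_invariant st"
    and chain: "appends_chain st st' R (map (\<lambda>j. take j Tk) [lo..<Suc (length Tk)])"
    and "lo \<le> length Tk"
    and R: "\<forall>r. R = Some r \<longrightarrow> r < length (boxes st) \<and> \<not> has_piece st r"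
    and new: "\<forall>k. Suc k < Suc (length Tk) - lo
      \<longrightarrow> leaves_room st' (length (boxes st) + k) (length (boxes st) + Suc k)"
    and blocked: "\<forall>i<length (boxes st). \<forall>d. lo \<le> d \<longrightarrow> d < length Tk
      \<longrightarrow> btype (boxes st ! i) = take d Tk \<longrightarrow> \<not> has_piece st i
      \<longrightarrow> \<not> (\<exists>v. fits_child st i (take (Suc d) Tk) v)"
    and "valid_type Tk"
  shows "packer_invariant (add_piece st' Q (length (boxes st) + (length Tk - lo)))"
proof -
  note parts = inv[unfolded packer_invariant_def]
  have "parents_precede st'"
    using parents_precede_appends_chain[OF _ chain] parts R by blast
  moreover have "pieces_exactly_in_leaves (add_piece st' Q (length (boxes st) + (length Tk - lo)))"
    using pieces_exactly_in_leaves_after_chain[OF _ _ chain, of Q] parts R assms(3)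
    by (simp add: Suc_diff_le del: upt_Suc)
  moreover have "near_empty_leave_room st'"
    using near_empty_leave_room_appends_chain[OF _ _ _ chain] parts R new by (simp del: upt_Suc)
  moreover have "near_empty_twins_opposite st'"
    using near_empty_twins_opposite_appends_chain[OF inv chain R blocked assms(7)] .
  ultimately show ?thesis
    by (simp add: packer_invariant_def parents_precede_def near_empty_leave_room_def
        near_empty_twins_opposite_def)
qed

lemma packer_invariant_step:
  assumes "packer_invariant st" "op_step st P st'"
  shows "packer_invariant st'"
  using assms(2)
proof cases
  case (existing i Tk st1 q u)
  define a where "a = length (btype (boxes st ! i))"
  have i: "i < length (boxes st)" "\<not> has_piece st i" "valid_type Tk"
    "btype (boxes st ! i) = take a Tk" "a < length Tk"
    using existing(2) by (auto simp: candidate_def matches_def a_def)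
  note chain = alloc_chain_appends_chain[OF existing(4)[folded a_def]]
  have "\<forall>k. Suc k < length Tk - a
      \<longrightarrow> leaves_room st1 (length (boxes st) + k) (length (boxes st) + Suc k)"
    using alloc_chain_leaves_room[OF existing(4)[folded a_def]] child_chain_prefixes[of Tk a]
      assms(1) i by (simp add: packer_invariant_def)
  moreover have "\<not> (\<exists>v. fits_child st i' (take (Suc d) Tk) v)"
    if "i' < length (boxes st)" "Suc a \<le> d" "d < length Tk" "btype (boxes st ! i') = take d Tk"
      "\<not> has_piece st i'" for i' d
    \<comment> \<open>otherwise box i' would be a candidate of larger dimension than the chosen box i\<close>
    using that existing(2,3) by (fastforce simp: candidate_def a_def)
  ultimately show ?thesis
    using packer_invariant_after_chain[OF assms(1), of st1 "Some i" Tk "Suc a" "shift u P"]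
      chain i by (simp add: existing(1) Suc_diff_Suc del: upt_Suc)
next
  case (new v Tk st1 q u)
  define n where "n = length (boxes st)"
  define st0 where "st0 = add_box st [] v None"
  have "valid_type Tk" using new(4) by (simp add: matches_def)
  have inv: "parents_precede st" using assms(1) by (simp add: packer_invariant_def)
  then have inv0: "parents_precede st0" "children st0 n = {}"
    using children_fresh[OF inv] by (simp_all add: st0_def n_def parents_precede_add_box children_add_box)
  note tail = alloc_chain_appends_chain[OF new(5)[folded st0_def]]
  have q: "q = n + length Tk"
    using tail by (simp add: st0_def n_def del: upt_Suc)
  have "map (\<lambda>j. take j Tk) [0..<Suc (length Tk)] = [] # map (\<lambda>j. take j Tk) [1..<Suc (length Tk)]"
    by (simp add: upt_conv_Cons del: upt_Suc)
  then have chain: "appends_chain st st1 None (map (\<lambda>j. take j Tk) [0..<Suc (length Tk)])"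
    using appends_chain_Cons[OF appends_chain_add_box tail[THEN conjunct1, unfolded st0_def]]
    by simp
  have "leaves_room st1 (n + k) (n + Suc k)" if "Suc k < Suc (length Tk)" for k
    using alloc_chain_leaves_room[OF new(5)[folded st0_def]] child_chain_prefixes[of Tk 0]
      \<open>valid_type Tk\<close> inv0 that
    by (cases k) (simp_all add: st0_def n_def nth_boxes_add_box)
  moreover have "\<not> (\<exists>v. fits_child st i (take (Suc d) Tk) v)"
    if "i < length (boxes st)" "d < length Tk" "btype (boxes st ! i) = take d Tk"
      "\<not> has_piece st i" for i d
    using that new(2,4) by (fastforce simp: candidate_def)
  ultimately show ?thesis
    using packer_invariant_after_chain[OF assms(1) chain, where Q = "shift u P"] \<open>valid_type Tk\<close>
    by (simp add: new(1) q n_def)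
qed

lemma reachable_packer_invariant: "reachable st \<Longrightarrow> packer_invariant st"
  by (induction rule: reachable.induct) (auto intro: packer_invariant_init packer_invariant_step)

lemma card_le_2_if_pairwise_opposite:
  fixes f :: "'a \<Rightarrow> int"
  assumes "\<And>i j. i \<in> S \<Longrightarrow> j \<in> S \<Longrightarrow> i \<noteq> j \<Longrightarrow> f i \<noteq> 0 \<and> f j = - f i"
  shows "card S \<le> 2"
proof (rule ccontr)
  assume "\<not> card S \<le> 2"
  then obtain S' where "S' \<subseteq> S" "card S' = 3"
    using obtain_subset_with_card_n[of 3 S] by auto
  then obtain a b c where "a \<in> S" "b \<in> S" "c \<in> S" "a \<noteq> b" "b \<noteq> c" "a \<noteq> c"
    by (auto simp: card_3_iff)
  then show False
    using assms[of a b] assms[of a c] assms[of b c] by auto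
qed

theorem lemma16:
  fixes st :: pstate and T :: "int list"
  assumes "reachable st"
  shows "card {i. i < length (boxes st) \<and> btype (boxes st ! i) = T \<and> near_empty st i} \<le> 2"
proof (rule card_le_2_if_pairwise_opposite)
  define dir where "dir i = last (btype (boxes st ! the_elem (children st i)))" for i
  have twins: "near_empty_twins_opposite st"
    using reachable_packer_invariant[OF assms] by (simp add: packer_invariant_def)
  fix i j
  assume i: "i \<in> {i. i < length (boxes st) \<and> btype (boxes st ! i) = T \<and> near_empty st i}"
    and j: "j \<in> {i. i < length (boxes st) \<and> btype (boxes st ! i) = T \<and> near_empty st i}"
    and "i \<noteq> j"
  then obtain ci cj where children: "children st i = {ci}" "children st j = {cj}"
    by (auto simp: near_empty_def card_1_singleton_iff)
  have dir: "dir i = last (btype (boxes st ! ci))" "dir j = last (btype (boxes st ! cj))"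
    by (simp_all add: dir_def children)
  note opposite = twins[unfolded near_empty_twins_opposite_def, rule_format]
  consider "i < j" | "j < i" using \<open>i \<noteq> j\<close> by linarith
  then show "dir i \<noteq> 0 \<and> dir j = - dir i"
  proof cases
    case 1
    then show ?thesis using opposite[of i j ci cj] i j children dir by simp
  next
    case 2
    then show ?thesis using opposite[of j i cj ci] i j children dir by auto
  qed
qed

end
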